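(* Let $p(n)$ denote the number of integer partitions of a nonnegative integer $n$, and set $p(-k)=0$ for every positive integer $k$. Then for all integers $N$ and $\ell$, $$V_d\left(\ell,\,N+\frac{|\ell|(|\ell|+1)}{2}\right)=\sum_{n\ge 0}\left(\frac{-3}{2n+1}\right)p\left(N-\frac{2n(n+1)}{3}-n|\ell|\right),$$ where $\left(\frac{-3}{\cdot}\right)$ is the Kronecker symbol (so $\left(\frac{-3}{2n+1}\right)$ equals $1$ if $n\equiv 0 \pmod 3$, $0$ if $n\equiv 1\pmod 3$, and $-1$ if $n\equiv 2\pmod 3$). In particular, for all integers $m,n$ with $0\le n<\frac{|m|(|m|+5)}{2}+4$, $$V_d(m,n)=p\left(n-\frac{|m|(|m|+1)}{2}\right).$$
   Context: A strongly concave composition of a nonnegative integer $n$ is a finite sequence of nonnegative integers $(a_1,\dots,a_s)$, $s\ge 1$, summing to $n$, such that for some index $k$ with $1\le k\le s$ one has $a_1>a_2>\dots>a_{k-1}>a_k<a_{k+1}<\dots<a_s$; $a_k$ is called the central part. Its rank is $s-2k+1$. $V_d(m,n)$ denotes the number of strongly concave compositions of $n$ with rank $m$ (and $V_d(m,n)=0$ for $n<0$). $p(n)$ is the partition function, with $p(n)=0$ for negative integers $n$. *)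

theory Defs
  imports Complex_Main "HOL-Library.Multiset"
begin

definition partitions_count :: "int \<Rightarrow> int" where
  "partitions_count n =
     (if n < 0 then 0
      else int (card {M :: nat multiset. (\<forall>x\<in>#M. 0 < x) \<and> sum_mset M = nat n}))"

(* A list c = (a_1,...,a_s) is strongly concave with central part at position k
   (1-indexed): a_1 > ... > a_{k-1} > a_k < a_{k+1} < ... < a_s. *)
definition strongly_concave_at :: "nat list \<Rightarrow> nat \<Rightarrow> bool" where
  "strongly_concave_at c k \<longleftrightarrow> 1 \<le> k \<and> k \<le> length c \<and>
     (\<forall>i. 1 \<le> i \<and> i < k \<longrightarrow> c ! (i - 1) > c ! i) \<and>
     (\<forall>i. k \<le> i \<and> i < length c \<longrightarrow> c ! (i - 1) < c ! i)"

definition Vd :: "int \<Rightarrow> int \<Rightarrow> int" where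
  "Vd m n =
     (if n < 0 then 0
      else int (card {c :: nat list. sum_list c = nat n \<and>
              (\<exists>k. strongly_concave_at c k \<and>
                   int (length c) - 2 * int k + 1 = m)}))"

(* Kronecker symbol (-3 / 2n+1) *)
definition kron_m3 :: "nat \<Rightarrow> int" where
  "kron_m3 n = (if n mod 3 = 0 then 1 else if n mod 3 = 1 then 0 else -1)"

end

theory Submission
  imports Defs "HOL-Computational_Algebra.Formal_Power_Series"
begin

text \<open>
  A strongly concave composition of rank l is determined by its central part c and the sets A and
  B of parts before and after it, all exceeding c, with card B - card A = l. Summing the product
  of the generating functions of such sets over c shows that for l \<ge> 0 these compositions are
  counted by q^(l(l+1)/2) R_l, where
  R_l = \<Sum>_a q^(a(a+l+1)) / ((q)_a (q)_(a+l) (1 - q^(2a+l+1))),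
  and rank -l gives the same numbers. Together with the companion series S_l, whose exponents are
  a(a+l+2), it satisfies R_l + q^(2l+4) S_(l+2) = P and S_l + q^(l+2) R_(l+2) = P, where
  P = \<Sum>_b q^(b(b+m)) / ((q)_b (q)_(b+m)) = 1/(q)_\<infinity> is the partition generating
  function (Durfee's identity). Two theta-type series solve the same system with 1 in place of P,
  and the system has a unique solution, so R_l = P \<Sum>_k (-3/(2k+1)) q^(2k(k+1)/3 + kl).
  Comparing coefficients gives the formula; for small n only the term k = 0 survives.
\<close>

unbundle fps_syntax

section \<open>Infinite sums of formal power series\<close>

definition fps_summable :: "(nat \<Rightarrow> 'a::zero fps) \<Rightarrow> bool" where
  "fps_summable f \<longleftrightarrow> (\<forall>b n. n < b \<longrightarrow> f b $ n = 0)"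

text \<open>Only the terms with index at most n enter the n-th coefficient, so this is the actual sum
  only for summable families.\<close>
definition fps_infsum :: "(nat \<Rightarrow> 'a::comm_monoid_add fps) \<Rightarrow> 'a fps" where
  "fps_infsum f = Abs_fps (\<lambda>n. \<Sum>b\<le>n. f b $ n)"

lemma fps_infsum_nth: "fps_infsum f $ n = (\<Sum>b\<le>n. f b $ n)"
  by (simp add: fps_infsum_def)

lemma fps_infsum_nth_atMost:
  assumes "fps_summable f" "n \<le> N"
  shows "fps_infsum f $ n = (\<Sum>b\<le>N. f b $ n)"
  unfolding fps_infsum_nth
  by (rule sum.mono_neutral_left) (use assms in \<open>auto simp: fps_summable_def\<close>)

lemma fps_infsum_add: "fps_infsum (\<lambda>b. f b + g b) = fps_infsum f + fps_infsum g"
  by (rule fps_ext) (simp add: fps_infsum_nth sum.distrib)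

lemma fps_infsum_diff:
  "fps_infsum (\<lambda>b. f b - g b) = fps_infsum f - (fps_infsum g :: 'a::ab_group_add fps)"
  by (rule fps_ext) (simp add: fps_infsum_nth sum_subtractf)

lemma fps_summable_diff:
  "fps_summable f \<Longrightarrow> fps_summable g \<Longrightarrow> fps_summable (\<lambda>b. f b - (g b :: 'a::group_add fps))"
  by (simp add: fps_summable_def)

lemma fps_summable_X_power_mult:
  "(\<And>b. b \<le> e b) \<Longrightarrow> fps_summable (\<lambda>b. fps_X ^ e b * (h b :: 'a::comm_semiring_1 fps))"
  by (auto simp: fps_summable_def fps_X_power_mult_nth intro: less_le_trans)

lemma fps_summable_X_power:
  "(\<And>b. b \<le> e b) \<Longrightarrow> fps_summable (\<lambda>b. fps_X ^ e b :: 'a::comm_semiring_1 fps)"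
  using fps_summable_X_power_mult[of e "\<lambda>_. 1"] by simp

lemma fps_infsum_mult_left:
  assumes "fps_summable f"
  shows "fps_infsum (\<lambda>b. g * f b) = g * (fps_infsum f :: 'a::comm_semiring_0 fps)"
proof (rule fps_ext)
  fix n
  have "(g * fps_infsum f) $ n = (\<Sum>i=0..n. g $ i * (\<Sum>b\<le>n. f b) $ (n - i))"
    by (simp add: fps_mult_nth fps_infsum_nth_atMost[OF assms, where N = n] fps_sum_nth)
  also have "\<dots> = (\<Sum>b\<le>n. g * f b) $ n"
    by (simp only: fps_mult_nth[symmetric] sum_distrib_left)
  finally show "fps_infsum (\<lambda>b. g * f b) $ n = (g * fps_infsum f) $ n"
    by (simp add: fps_infsum_nth fps_sum_nth)
qed

lemma fps_infsum_split_first: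
  assumes "fps_summable f"
  shows "fps_infsum f = f 0 + fps_infsum (\<lambda>b. f (Suc b))"
proof (rule fps_ext)
  fix n
  have "fps_infsum f $ n = (\<Sum>b\<le>Suc n. f b $ n)"
    by (rule fps_infsum_nth_atMost[OF assms]) simp
  then show "fps_infsum f $ n = (f 0 + fps_infsum (\<lambda>b. f (Suc b))) $ n"
    by (simp only: sum.atMost_Suc_shift fps_add_nth fps_infsum_nth)
qed

lemma fps_infsum_add_mult_shifted:
  fixes f h d :: "nat \<Rightarrow> 'a::comm_ring_1 fps"
  assumes "fps_summable f" "fps_summable h" "fps_summable d"
    and "f 0 = d 0" "\<And>b. f (Suc b) + g * h b = d (Suc b)"
  shows "fps_infsum f + g * fps_infsum h = fps_infsum d"
proof -
  have "fps_infsum f + g * fps_infsum h = f 0 + fps_infsum (\<lambda>b. f (Suc b) + g * h b)"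
    by (simp add: fps_infsum_split_first[OF assms(1)] fps_infsum_mult_left[OF assms(2), symmetric]
        fps_infsum_add add.assoc)
  also have "\<dots> = fps_infsum d"
    using assms(4,5) by (simp add: fps_infsum_split_first[OF assms(3)])
  finally show ?thesis .
qed

lemma fps_infsum_telescope:
  "fps_summable f \<Longrightarrow> fps_infsum (\<lambda>b. f b - f (Suc b)) = (f 0 :: 'a::ab_group_add fps)"
  by (simp add: fps_infsum_diff fps_infsum_split_first[of f])

lemma fps_infsum_group:
  assumes "fps_summable f" "d > 0"
  shows "fps_infsum f = fps_infsum (\<lambda>j. \<Sum>i\<in>{j * d..<j * d + d}. f i)"
proof (rule fps_ext)
  fix n
  have "fps_infsum (\<lambda>j. \<Sum>i\<in>{j * d..<j * d + d}. f i) $ n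
      = (\<Sum>j<Suc n. \<Sum>i\<in>{j * d..<j * d + d}. f i $ n)"
    by (simp add: fps_infsum_nth fps_sum_nth lessThan_Suc_atMost)
  also have "\<dots> = (\<Sum>i<Suc n * d. f i $ n)"
    by (rule sum.nat_group)
  also have "\<dots> = (\<Sum>i\<le>n. f i $ n)"
  proof (rule sum.mono_neutral_right)
    have "n < Suc n * d"
      using assms(2) by (simp add: add_strict_increasing)
    then show "{..n} \<subseteq> {..<Suc n * d}"
      by auto
  qed (use assms(1) in \<open>auto simp: fps_summable_def\<close>)
  finally show "fps_infsum f $ n = fps_infsum (\<lambda>j. \<Sum>i\<in>{j * d..<j * d + d}. f i) $ n"
    by (simp add: fps_infsum_nth)
qed

section \<open>Geometric series, partitions and Durfee's identity\<close>

definition geom :: "nat \<Rightarrow> real fps" where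
  "geom k = inverse (1 - fps_X ^ k)"

lemma geom_mult_one_minus_X_power: "k \<ge> 1 \<Longrightarrow> geom k * (1 - fps_X ^ k) = 1"
  unfolding geom_def by (rule inverse_mult_eq_1) (cases k; simp)

lemma X_power_mult_geom: "k \<ge> 1 \<Longrightarrow> fps_X ^ k * geom k = geom k - 1"
  using geom_mult_one_minus_X_power[of k] by (simp add: algebra_simps)

lemma geom_mult_geom:
  assumes "j \<ge> 1" "k \<ge> 1"
  shows "geom j * geom k = geom (j + k) * (geom j + geom k - 1)"
proof -
  have "(fps_X ^ j * geom j) * (fps_X ^ k * geom k) = (geom j - 1) * (geom k - 1)"
    by (simp only: X_power_mult_geom assms)
  then have "geom j + geom k - 1 = geom j * geom k * (1 - fps_X ^ (j + k))"
    by (simp add: power_add algebra_simps)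
  then have "geom (j + k) * (geom j + geom k - 1)
      = geom j * geom k * (geom (j + k) * (1 - fps_X ^ (j + k)))"
    by (simp only: mult_ac)
  then show ?thesis
    using assms by (simp add: geom_mult_one_minus_X_power)
qed

lemma geom_eq_partial_sum:
  assumes "k \<ge> 1"
  shows "geom k = (\<Sum>c<N. fps_X ^ (c * k)) + fps_X ^ (N * k) * geom k"
proof (induction N)
  case (Suc N)
  have "fps_X ^ (Suc N * k) * geom k = fps_X ^ (N * k) * (fps_X ^ k * geom k)"
    by (simp add: power_add mult_ac)
  then have step: "fps_X ^ (N * k) * geom k = fps_X ^ (N * k) + fps_X ^ (Suc N * k) * geom k"
    by (simp only: X_power_mult_geom[OF assms] right_diff_distrib) simp
  show ?case
    by (subst (1) Suc.IH) (simp only: step sum.lessThan_Suc add.assoc)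
qed simp

lemma nth_mult_geom:
  assumes "k \<ge> 1"
  shows "(F * geom k) $ n = (\<Sum>c\<le>n. (F * fps_X ^ (c * k)) $ n)"
proof -
  have "F * geom k = F * ((\<Sum>c\<le>n. fps_X ^ (c * k)) + fps_X ^ (Suc n * k) * geom k)"
    using geom_eq_partial_sum[OF assms, of "Suc n"] by (simp add: lessThan_Suc_atMost)
  also have "\<dots> = F * (\<Sum>c\<le>n. fps_X ^ (c * k)) + fps_X ^ (Suc n * k) * (F * geom k)"
    by (simp only: distrib_left mult_ac)
  finally have "(F * geom k) $ n
      = (F * (\<Sum>c\<le>n. fps_X ^ (c * k)) + fps_X ^ (Suc n * k) * (F * geom k)) $ n"
    by (rule arg_cong)
  moreover have "n < Suc n * k"
    using assms by (metis Suc_le_eq mult.right_neutral mult_le_mono2)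
  ultimately show ?thesis
    by (simp add: fps_X_power_mult_nth sum_distrib_left fps_sum_nth)
qed

definition qpoch_inv :: "nat \<Rightarrow> real fps" where
  "qpoch_inv k = (\<Prod>i\<in>{1..k}. geom i)"

lemma qpoch_inv_0 [simp]: "qpoch_inv 0 = 1"
  by (simp add: qpoch_inv_def)

lemma qpoch_inv_Suc: "qpoch_inv (Suc k) = qpoch_inv k * geom (Suc k)"
  by (simp add: qpoch_inv_def)

lemma eq_mult_geomI:
  assumes "k \<ge> 1" "C = A + fps_X ^ k * C"
  shows "C = A * geom k"
proof -
  have "C * (1 - fps_X ^ k) = A"
    using assms(2) by (simp add: algebra_simps)
  then have "C * (1 - fps_X ^ k) * geom k = A * geom k"
    by simp
  then show ?thesis
    using geom_mult_one_minus_X_power[OF assms(1)] by (simp add: mult_ac)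
qed

definition bounded_partitions :: "nat \<Rightarrow> nat \<Rightarrow> nat multiset set" where
  "bounded_partitions k n = {M. set_mset M \<subseteq> {1..k} \<and> sum_mset M = n}"

lemma size_le_sum_mset: "(\<forall>x\<in>#M. 0 < x) \<Longrightarrow> size M \<le> sum_mset (M :: nat multiset)"
  by (induction M) auto

lemma member_le_sum_mset: "x \<in># M \<Longrightarrow> x \<le> sum_mset (M :: nat multiset)"
  by (auto dest: multi_member_split)

lemma finite_bounded_partitions: "finite (bounded_partitions k n)"
proof (rule finite_subset)
  show "bounded_partitions k n \<subseteq> (\<Union>s\<le>n. multisets_of_size {1..k} s)"
  proof
    fix M assume "M \<in> bounded_partitions k n"
    then have "set_mset M \<subseteq> {1..k}" "size M \<le> n"
      using size_le_sum_mset[of M] by (force simp: bounded_partitions_def)+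
    then show "M \<in> (\<Union>s\<le>n. multisets_of_size {1..k} s)"
      by (auto simp: multisets_of_size_def)
  qed
qed (simp add: finite_multisets_of_size)

lemma bounded_partitions_Suc_small:
  assumes "n < Suc k"
  shows "bounded_partitions (Suc k) n = bounded_partitions k n"
  unfolding bounded_partitions_def
proof (intro Collect_cong iffI)
  fix M :: "nat multiset"
  assume "set_mset M \<subseteq> {1..Suc k} \<and> sum_mset M = n"
  then show "set_mset M \<subseteq> {1..k} \<and> sum_mset M = n"
    using assms by (fastforce dest: member_le_sum_mset)
qed auto

lemma bounded_partitions_Suc_large:
  "bounded_partitions (Suc k) (n + Suc k)
     = bounded_partitions k (n + Suc k) \<union> add_mset (Suc k) ` bounded_partitions (Suc k) n"
proof (intro equalityI subsetI)
  fix M assume M: "M \<in> bounded_partitions (Suc k) (n + Suc k)"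
  show "M \<in> bounded_partitions k (n + Suc k) \<union> add_mset (Suc k) ` bounded_partitions (Suc k) n"
  proof (cases "Suc k \<in># M")
    case True
    then obtain M' where "M = add_mset (Suc k) M'"
      by (blast dest: multi_member_split)
    then show ?thesis
      using M by (auto simp: bounded_partitions_def)
  next
    case False
    then show ?thesis
      using M by (force simp: bounded_partitions_def le_Suc_eq)
  qed
qed (auto simp: bounded_partitions_def)

lemma card_bounded_partitions_Suc_large:
  "card (bounded_partitions (Suc k) (n + Suc k))
     = card (bounded_partitions k (n + Suc k)) + card (bounded_partitions (Suc k) n)"
proof -
  have "bounded_partitions k (n + Suc k) \<inter> add_mset (Suc k) ` bounded_partitions (Suc k) n = {}"
    by (auto simp: bounded_partitions_def)
  moreover have "inj_on (add_mset (Suc k)) (bounded_partitions (Suc k) n)"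
    by (simp add: inj_on_def)
  ultimately show ?thesis
    unfolding bounded_partitions_Suc_large
    by (simp add: card_Un_disjoint finite_bounded_partitions card_image)
qed

lemma qpoch_inv_nth: "qpoch_inv k $ n = real (card (bounded_partitions k n))"
proof (induction k arbitrary: n)
  case 0
  have "bounded_partitions 0 n = (if n = 0 then {{#}} else {})"
    by (auto simp: bounded_partitions_def)
  then show ?case
    by simp
next
  case (Suc k)
  define C where "C = Abs_fps (\<lambda>n. real (card (bounded_partitions (Suc k) n)))"
  have "C = qpoch_inv k + fps_X ^ Suc k * C"
  proof (rule fps_ext)
    fix n
    show "C $ n = (qpoch_inv k + fps_X ^ Suc k * C) $ n"
    proof (cases "n < Suc k")
      case True
      then show ?thesis
        by (simp add: C_def Suc bounded_partitions_Suc_small fps_X_power_mult_nth del: power_Suc)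
    next
      case False
      define n' where "n' = n - Suc k"
      have n: "n = n' + Suc k"
        using False by (simp add: n'_def)
      have "C $ n = real (card (bounded_partitions k n)) + C $ n'"
        unfolding C_def n fps_nth_Abs_fps card_bounded_partitions_Suc_large by simp
      then show ?thesis
        using n by (simp add: Suc fps_X_power_mult_nth del: power_Suc)
    qed
  qed
  then have "C = qpoch_inv (Suc k)"
    unfolding qpoch_inv_Suc by (rule eq_mult_geomI[rotated]) simp
  then show ?case
    by (metis C_def fps_nth_Abs_fps)
qed

definition partition_fps :: "real fps" where
  "partition_fps = Abs_fps (\<lambda>n. of_int (partitions_count (int n)))"

lemma qpoch_inv_nth_eq_partition_fps:
  assumes "n \<le> k"
  shows "qpoch_inv k $ n = partition_fps $ n"
proof -
  have "{M. (\<forall>x\<in>#M. 0 < x) \<and> sum_mset M = n} = bounded_partitions k n"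
    unfolding bounded_partitions_def
  proof (intro Collect_cong iffI)
    fix M :: "nat multiset"
    assume "(\<forall>x\<in>#M. 0 < x) \<and> sum_mset M = n"
    then show "set_mset M \<subseteq> {1..k} \<and> sum_mset M = n"
      using assms by (auto simp: Suc_le_eq intro: order.trans[OF member_le_sum_mset])
  qed auto
  then show ?thesis
    by (simp add: qpoch_inv_nth partition_fps_def partitions_count_def)
qed

definition durfee_term :: "nat \<Rightarrow> nat \<Rightarrow> real fps" where
  "durfee_term m b = fps_X ^ (b * (b + m)) * qpoch_inv b * qpoch_inv (b + m)"

definition durfee_telescoper :: "nat \<Rightarrow> nat \<Rightarrow> real fps" where
  "durfee_telescoper m b =
     (if b = 0 then 0 else fps_X ^ (b * (b + m)) * qpoch_inv (b - 1) * qpoch_inv (b + m))"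

lemma fps_summable_durfee_term: "fps_summable (durfee_term m)"
  unfolding durfee_term_def mult.assoc
  by (rule fps_summable_X_power_mult) (simp add: le_square trans_le_add1)

lemma durfee_term_telescope:
  "durfee_term m b - durfee_term (Suc m) b = durfee_telescoper m b - durfee_telescoper m (Suc b)"
proof (cases b)
  case 0
  have "fps_X ^ Suc m * qpoch_inv (Suc m) = qpoch_inv m * (fps_X ^ Suc m * geom (Suc m))"
    by (simp add: qpoch_inv_Suc mult_ac del: power_Suc)
  also have "\<dots> = qpoch_inv m * geom (Suc m) - qpoch_inv m"
    by (simp only: X_power_mult_geom right_diff_distrib) simp
  finally show ?thesis
    using 0 by (simp add: durfee_term_def durfee_telescoper_def qpoch_inv_Suc del: power_Suc)
next
  case (Suc c)
  define E where "E = Suc c * (Suc c + m)"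
  define u v where "u = geom (Suc c)" and "v = geom (Suc (Suc (c + m)))"
  define Z where "Z = fps_X ^ E * qpoch_inv c * qpoch_inv (Suc c + m)"
  have u: "fps_X ^ Suc c * u = u - 1" and v: "fps_X ^ Suc (Suc (c + m)) * v = v - 1"
    unfolding u_def v_def by (simp_all only: X_power_mult_geom le_add1 Suc_le_mono)
  have q: "qpoch_inv (Suc c) = qpoch_inv c * u"
    "qpoch_inv (Suc (Suc (c + m))) = qpoch_inv (Suc c + m) * v"
    by (simp_all add: u_def v_def qpoch_inv_Suc del: qpoch_inv_0)
  have e1: "Suc c * (Suc c + Suc m) = E + Suc c"
    and e2: "Suc (Suc c) * (Suc (Suc c) + m) = E + Suc c + Suc (Suc (c + m))"
    by (simp_all add: E_def algebra_simps)
  have "durfee_term m b - durfee_term (Suc m) b = Z * (u - fps_X ^ Suc c * u * v)"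
    unfolding Suc durfee_term_def e1 E_def[symmetric] Z_def
    by (simp add: q power_add algebra_simps del: qpoch_inv_0)
  also have "u - fps_X ^ Suc c * u * v = 1 - (fps_X ^ Suc c * u) * (fps_X ^ Suc (Suc (c + m)) * v)"
    unfolding u v by (simp add: algebra_simps)
  also have "Z * \<dots> = durfee_telescoper m b - durfee_telescoper m (Suc b)"
    unfolding Suc durfee_telescoper_def e2 E_def[symmetric] Z_def
    by (simp add: q power_add algebra_simps del: qpoch_inv_0)
  finally show ?thesis .
qed

lemma durfee_series_Suc: "fps_infsum (durfee_term m) = fps_infsum (durfee_term (Suc m))"
proof (rule fps_ext)
  fix n
  have "fps_infsum (durfee_term m) $ n - fps_infsum (durfee_term (Suc m)) $ n
      = (\<Sum>b\<le>n. durfee_term m b - durfee_term (Suc m) b) $ n"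
    by (simp add: fps_infsum_nth fps_sum_nth sum_subtractf)
  also have "\<dots> = (durfee_telescoper m 0 - durfee_telescoper m (Suc n)) $ n"
    by (simp only: durfee_term_telescope sum_telescope)
  also have "\<dots> = 0"
  proof -
    have "n < Suc n * (Suc n + m)"
      by simp
    then show ?thesis
      by (simp add: durfee_telescoper_def fps_X_power_mult_nth mult.assoc
          del: mult_Suc mult_Suc_right)
  qed
  finally show "fps_infsum (durfee_term m) $ n = fps_infsum (durfee_term (Suc m)) $ n"
    by simp
qed

lemma durfee_identity: "fps_infsum (durfee_term m) = partition_fps"
proof (rule fps_ext)
  fix n
  have "fps_infsum (durfee_term m) = fps_infsum (durfee_term (m + k))" for k
  proof (induction k)
    case (Suc k)
    then show ?case
      using durfee_series_Suc[of "m + k"] by simp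
  qed simp
  then have "fps_infsum (durfee_term m) $ n = fps_infsum (durfee_term (m + n)) $ n"
    by metis
  also have "\<dots> = (\<Sum>b\<le>n. durfee_term (m + n) b $ n)"
    by (simp add: fps_infsum_nth)
  also have "\<dots> = durfee_term (m + n) 0 $ n"
  proof -
    have "durfee_term (m + n) (Suc b) $ n = 0" for b
    proof -
      have "n < Suc b * (Suc b + (m + n))"
        by simp
      then show ?thesis
        by (simp add: durfee_term_def fps_X_power_mult_nth mult.assoc
            del: mult_Suc mult_Suc_right)
    qed
    then show ?thesis
      by (simp add: sum.atMost_shift)
  qed
  also have "\<dots> = partition_fps $ n"
    by (simp add: durfee_term_def qpoch_inv_nth_eq_partition_fps)
  finally show "fps_infsum (durfee_term m) $ n = partition_fps $ n" .
qed

section \<open>Sets of distinct parts\<close>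

fun triangular :: "nat \<Rightarrow> nat" where
  "triangular 0 = 0"
| "triangular (Suc k) = triangular k + Suc k"

lemma two_triangular: "2 * triangular k = k * (k + 1)"
  by (induction k) (simp_all add: algebra_simps)

definition distinct_parts :: "nat \<Rightarrow> nat \<Rightarrow> nat \<Rightarrow> nat set set" where
  "distinct_parts c k s = {S. finite S \<and> card S = k \<and> (\<forall>x\<in>S. c < x) \<and> \<Sum>S = s}"

definition distinct_parts_fps :: "nat \<Rightarrow> nat \<Rightarrow> real fps" where
  "distinct_parts_fps c k = Abs_fps (\<lambda>s. real (card (distinct_parts c k s)))"

lemma finite_distinct_parts: "finite (distinct_parts c k s)"
proof (rule finite_subset)
  show "distinct_parts c k s \<subseteq> Pow {..s}"
    by (auto simp: distinct_parts_def intro: member_le_sum)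
qed simp

lemma distinct_parts_below: "s < c * k \<Longrightarrow> distinct_parts c k s = {}"
proof (rule ccontr)
  assume "s < c * k" "distinct_parts c k s \<noteq> {}"
  then obtain S where S: "finite S" "card S = k" "\<forall>x\<in>S. c < x" "\<Sum>S = s"
    by (auto simp: distinct_parts_def)
  then have "(\<Sum>x\<in>S. c) \<le> \<Sum>S"
    by (intro sum_mono) (simp add: less_imp_le)
  with S \<open>s < c * k\<close> show False
    by (simp add: mult.commute)
qed

lemma distinct_parts_shift:
  "distinct_parts c k (s + c * k) = (\<lambda>T. (\<lambda>x. x + c) ` T) ` distinct_parts 0 k s"
proof (intro equalityI subsetI)
  fix S assume S: "S \<in> distinct_parts c k (s + c * k)"
  define T where "T = (\<lambda>x. x - c) ` S"
  have S_eq: "S = (\<lambda>x. x + c) ` T"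
    using S by (force simp: T_def distinct_parts_def image_image)
  have "inj_on (\<lambda>x. x - c) S"
    using S by (auto simp: inj_on_def distinct_parts_def)
  then have "card T = k" "finite T"
    using S by (simp_all add: T_def card_image distinct_parts_def)
  moreover have "\<Sum>T = s"
    using S \<open>card T = k\<close> \<open>finite T\<close>
    by (simp add: S_eq sum.reindex sum.distrib distinct_parts_def mult.commute)
  moreover have "\<forall>x\<in>T. 0 < x"
    using S by (auto simp: T_def distinct_parts_def)
  ultimately show "S \<in> (\<lambda>T. (\<lambda>x. x + c) ` T) ` distinct_parts 0 k s"
    using S_eq by (auto simp: distinct_parts_def)
next
  fix S assume "S \<in> (\<lambda>T. (\<lambda>x. x + c) ` T) ` distinct_parts 0 k s"
  then obtain T where "S = (\<lambda>x. x + c) ` T" "T \<in> distinct_parts 0 k s"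
    by blast
  then show "S \<in> distinct_parts c k (s + c * k)"
    by (auto simp: distinct_parts_def card_image sum.reindex sum.distrib mult.commute)
qed

lemma card_distinct_parts_shift:
  "card (distinct_parts c k (s + c * k)) = card (distinct_parts 0 k s)"
proof -
  have "inj (\<lambda>x::nat. x + c)"
    by (simp add: inj_on_def)
  then have "inj (\<lambda>T. (\<lambda>x. x + c) ` T)"
    by (simp add: inj_on_def inj_image_eq_iff)
  then show ?thesis
    by (simp add: distinct_parts_shift card_image inj_on_subset[of _ UNIV])
qed

lemma distinct_parts_fps_shift:
  "distinct_parts_fps c k = fps_X ^ (c * k) * distinct_parts_fps 0 k"
proof (rule fps_ext)
  fix n
  show "distinct_parts_fps c k $ n = (fps_X ^ (c * k) * distinct_parts_fps 0 k) $ n"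
  proof (cases "n < c * k")
    case False
    then have "n = (n - c * k) + c * k"
      by simp
    then show ?thesis
      using False by (metis distinct_parts_fps_def fps_X_power_mult_nth fps_nth_Abs_fps
          card_distinct_parts_shift)
  qed (simp add: distinct_parts_fps_def fps_X_power_mult_nth distinct_parts_below)
qed

lemma distinct_parts_zero_Suc:
  "distinct_parts 0 (Suc k) (Suc n)
     = insert 1 ` distinct_parts 1 k n \<union> distinct_parts 1 (Suc k) (Suc n)"
proof (intro equalityI subsetI)
  fix S assume S: "S \<in> distinct_parts 0 (Suc k) (Suc n)"
  then have fin: "finite S" and pos: "\<forall>x\<in>S. 0 < x"
    by (simp_all add: distinct_parts_def)
  show "S \<in> insert 1 ` distinct_parts 1 k n \<union> distinct_parts 1 (Suc k) (Suc n)"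
  proof (cases "1 \<in> S")
    case True
    have "\<forall>x\<in>S - {1}. 1 < x"
      using pos by auto
    then have "S - {1} \<in> distinct_parts 1 k n"
      using S True fin by (simp add: distinct_parts_def sum_diff1_nat)
    moreover have "S = insert 1 (S - {1})"
      using True by (simp add: insert_absorb)
    ultimately show ?thesis
      by blast
  next
    case False
    then have "\<forall>x\<in>S. 1 < x"
      using pos by (metis less_one nat_neq_iff)
    then show ?thesis
      using S by (simp add: distinct_parts_def)
  qed
next
  fix S assume "S \<in> insert 1 ` distinct_parts 1 k n \<union> distinct_parts 1 (Suc k) (Suc n)"
  then show "S \<in> distinct_parts 0 (Suc k) (Suc n)"
  proof
    assume "S \<in> insert 1 ` distinct_parts 1 k n"
    then obtain T where T: "S = insert 1 T" "T \<in> distinct_parts 1 k n"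
      by blast
    then have "1 \<notin> T"
      by (auto simp: distinct_parts_def)
    with T show ?thesis
      by (auto simp: distinct_parts_def)
  qed (auto simp: distinct_parts_def)
qed

lemma card_distinct_parts_zero_Suc:
  "card (distinct_parts 0 (Suc k) (Suc n))
     = card (distinct_parts 1 k n) + card (distinct_parts 1 (Suc k) (Suc n))"
proof -
  have "inj_on (insert 1) (distinct_parts 1 k n)"
  proof (rule inj_onI)
    fix A B assume "A \<in> distinct_parts 1 k n" "B \<in> distinct_parts 1 k n" "insert 1 A = insert 1 B"
    moreover from this have "1 \<notin> A" "1 \<notin> B"
      by (auto simp: distinct_parts_def)
    ultimately show "A = B"
      by (simp add: insert_ident)
  qed
  moreover have "insert 1 ` distinct_parts 1 k n \<inter> distinct_parts 1 (Suc k) (Suc n) = {}"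
    by (auto simp: distinct_parts_def)
  ultimately show ?thesis
    unfolding distinct_parts_zero_Suc
    by (simp add: card_Un_disjoint finite_distinct_parts card_image)
qed

lemma distinct_parts_fps_zero_Suc:
  "distinct_parts_fps 0 (Suc k) = fps_X * distinct_parts_fps 1 k + distinct_parts_fps 1 (Suc k)"
proof (rule fps_ext)
  fix n
  show "distinct_parts_fps 0 (Suc k) $ n
      = (fps_X * distinct_parts_fps 1 k + distinct_parts_fps 1 (Suc k)) $ n"
  proof (cases n)
    case 0
    have "distinct_parts 0 (Suc k) 0 = {}" "distinct_parts 1 (Suc k) 0 = {}"
      by (auto simp: distinct_parts_def card_Suc_eq)
    then show ?thesis
      using 0 by (simp add: distinct_parts_fps_def)
  qed (simp add: distinct_parts_fps_def card_distinct_parts_zero_Suc)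
qed

lemma distinct_parts_fps_eq:
  "distinct_parts_fps c k = fps_X ^ (c * k + triangular k) * qpoch_inv k"
proof -
  have "distinct_parts_fps 0 k = fps_X ^ triangular k * qpoch_inv k"
  proof (induction k)
    case 0
    have "distinct_parts 0 0 s = (if s = 0 then {{}} else {})" for s
      by (auto simp: distinct_parts_def)
    then show ?case
      by (intro fps_ext) (simp add: distinct_parts_fps_def)
  next
    case (Suc k)
    have shift: "distinct_parts_fps 1 j = fps_X ^ j * distinct_parts_fps 0 j" for j
      using distinct_parts_fps_shift[of 1 j] by simp
    have "distinct_parts_fps 0 (Suc k) = fps_X * distinct_parts_fps 1 k + distinct_parts_fps 1 (Suc k)"
      by (rule distinct_parts_fps_zero_Suc)
    also have "\<dots> = fps_X ^ Suc k * distinct_parts_fps 0 k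
        + fps_X ^ Suc k * distinct_parts_fps 0 (Suc k)"
      by (simp only: shift power_Suc mult.assoc)
    finally have "distinct_parts_fps 0 (Suc k) = fps_X ^ Suc k * distinct_parts_fps 0 k * geom (Suc k)"
      by (rule eq_mult_geomI[rotated]) simp
    then show ?case
      by (simp only: Suc qpoch_inv_Suc triangular.simps power_add mult_ac)
  qed
  then show ?thesis
    by (simp add: distinct_parts_fps_shift[of c] power_add mult.assoc)
qed

section \<open>Strongly concave compositions as triples\<close>

lemma sorted_wrt_greater_take_iff:
  fixes L :: "nat list"
  assumes "k \<le> length L"
  shows "sorted_wrt (>) (take k L) \<longleftrightarrow> (\<forall>i. 1 \<le> i \<and> i < k \<longrightarrow> L ! (i - 1) > L ! i)"
proof -
  have "sorted_wrt (>) (take k L)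
      \<longleftrightarrow> (\<forall>i. Suc i < length (take k L) \<longrightarrow> take k L ! i > take k L ! Suc i)"
    by (rule sorted_wrt_iff_nth_Suc_transp) (auto intro: transpI)
  also have "\<dots> \<longleftrightarrow> (\<forall>i. Suc i < k \<longrightarrow> L ! i > L ! Suc i)"
    using assms by (auto simp: min_def)
  also have "\<dots> \<longleftrightarrow> (\<forall>i. 1 \<le> i \<and> i < k \<longrightarrow> L ! (i - 1) > L ! i)"
  proof
    assume h: "\<forall>i. Suc i < k \<longrightarrow> L ! i > L ! Suc i"
    show "\<forall>i. 1 \<le> i \<and> i < k \<longrightarrow> L ! (i - 1) > L ! i"
    proof (intro allI impI)
      fix i assume i: "1 \<le> i \<and> i < k"
      then obtain j where "i = Suc j"
        by (cases i) auto
      then show "L ! (i - 1) > L ! i"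
        using h i by auto
    qed
  next
    assume h: "\<forall>i. 1 \<le> i \<and> i < k \<longrightarrow> L ! (i - 1) > L ! i"
    show "\<forall>i. Suc i < k \<longrightarrow> L ! i > L ! Suc i"
      using h by (metis diff_Suc_1 le_add1 plus_1_eq_Suc)
  qed
  finally show ?thesis .
qed

lemma sorted_wrt_less_drop_iff:
  fixes L :: "nat list"
  assumes "1 \<le> k" "k \<le> length L"
  shows "sorted_wrt (<) (drop (k - 1) L)
    \<longleftrightarrow> (\<forall>i. k \<le> i \<and> i < length L \<longrightarrow> L ! (i - 1) < L ! i)"
proof -
  have "sorted_wrt (<) (drop (k - 1) L) \<longleftrightarrow>
        (\<forall>i. Suc i < length (drop (k - 1) L) \<longrightarrow> drop (k - 1) L ! i < drop (k - 1) L ! Suc i)"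
    by (rule sorted_wrt_iff_nth_Suc_transp) (auto intro: transpI)
  also have "\<dots> \<longleftrightarrow>
        (\<forall>i. Suc i < length L - (k - 1) \<longrightarrow> L ! (k - 1 + i) < L ! (k - 1 + Suc i))"
    using assms by (simp del: add_Suc_right)
  also have "\<dots> \<longleftrightarrow> (\<forall>i. k \<le> i \<and> i < length L \<longrightarrow> L ! (i - 1) < L ! i)"
  proof
    assume h: "\<forall>i. Suc i < length L - (k - 1) \<longrightarrow> L ! (k - 1 + i) < L ! (k - 1 + Suc i)"
    show "\<forall>i. k \<le> i \<and> i < length L \<longrightarrow> L ! (i - 1) < L ! i"
    proof (intro allI impI)
      fix i assume i: "k \<le> i \<and> i < length L"
      then have "Suc (i - k) < length L - (k - 1)"
        using assms by linarith
      then have "L ! (k - 1 + (i - k)) < L ! (k - 1 + Suc (i - k))"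
        using h by blast
      moreover have "k - 1 + (i - k) = i - 1" "k - 1 + Suc (i - k) = i"
        using i assms by linarith+
      ultimately show "L ! (i - 1) < L ! i"
        by simp
    qed
  next
    assume h: "\<forall>i. k \<le> i \<and> i < length L \<longrightarrow> L ! (i - 1) < L ! i"
    show "\<forall>i. Suc i < length L - (k - 1) \<longrightarrow> L ! (k - 1 + i) < L ! (k - 1 + Suc i)"
    proof (intro allI impI)
      fix i assume "Suc i < length L - (k - 1)"
      then have "k \<le> k - 1 + Suc i \<and> k - 1 + Suc i < length L"
        using assms by linarith
      then have "L ! (k - 1 + Suc i - 1) < L ! (k - 1 + Suc i)"
        using h by blast
      moreover have "k - 1 + Suc i - 1 = k - 1 + i"
        using assms by linarith
      ultimately show "L ! (k - 1 + i) < L ! (k - 1 + Suc i)"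
        by simp
    qed
  qed
  finally show ?thesis .
qed

lemma strongly_concave_at_iff:
  "strongly_concave_at L k \<longleftrightarrow>
     1 \<le> k \<and> k \<le> length L \<and> sorted_wrt (>) (take k L) \<and> sorted_wrt (<) (drop (k - 1) L)"
  unfolding strongly_concave_at_def
  using sorted_wrt_greater_take_iff sorted_wrt_less_drop_iff by blast

definition concave_triples :: "int \<Rightarrow> nat \<Rightarrow> (nat set \<times> nat \<times> nat set) set" where
  "concave_triples l n = {(A, c, B). finite A \<and> finite B \<and> (\<forall>x\<in>A. c < x) \<and> (\<forall>x\<in>B. c < x) \<and>
     c + \<Sum>A + \<Sum>B = n \<and> int (card B) - int (card A) = l}"

definition concave_compositions :: "int \<Rightarrow> nat \<Rightarrow> nat list set" where
  "concave_compositions l n = {L. sum_list L = n \<and>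
     (\<exists>k. strongly_concave_at L k \<and> int (length L) - 2 * int k + 1 = l)}"

definition composition_of_triple :: "nat set \<times> nat \<times> nat set \<Rightarrow> nat list" where
  "composition_of_triple = (\<lambda>(A, c, B). rev (sorted_list_of_set A) @ c # sorted_list_of_set B)"

definition triple_of_composition :: "nat list \<Rightarrow> nat set \<times> nat \<times> nat set" where
  "triple_of_composition L =
     (let c = Min (set L) in (set (takeWhile (\<lambda>x. x \<noteq> c) L), c, set (tl (dropWhile (\<lambda>x. x \<noteq> c) L))))"

lemma triple_of_composition_append_Cons:
  assumes "\<forall>x\<in>set xs \<union> set ys. c < (x :: nat)"
  shows "triple_of_composition (xs @ c # ys) = (set xs, c, set ys)"
proof -
  have "Min (set (xs @ c # ys)) = c"
    using assms by (intro Min_eqI) (auto simp: less_imp_le)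
  moreover have "\<forall>x\<in>set xs. x \<noteq> c"
    using assms by auto
  ultimately show ?thesis
    by (simp add: triple_of_composition_def)
qed

lemma composition_of_triple_mem:
  assumes "t \<in> concave_triples l n"
  shows "composition_of_triple t \<in> concave_compositions l n"
proof -
  obtain A c B where t: "t = (A, c, B)"
    by (cases t)
  have fin: "finite A" "finite B" and gt: "\<forall>x\<in>A. c < x" "\<forall>x\<in>B. c < x"
    and sum: "c + \<Sum>A + \<Sum>B = n" and rank: "int (card B) - int (card A) = l"
    using assms by (auto simp: t concave_triples_def)
  define xs ys where "xs = rev (sorted_list_of_set A)" and "ys = sorted_list_of_set B"
  have L: "composition_of_triple t = xs @ c # ys"
    by (simp add: composition_of_triple_def t xs_def ys_def)
  have sets: "set xs = A" "set ys = B"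
    using fin by (simp_all add: xs_def ys_def)
  have "sorted_wrt (>) xs" "sorted_wrt (<) ys"
    by (simp_all add: xs_def ys_def sorted_wrt_rev)
  then have "strongly_concave_at (xs @ c # ys) (Suc (length xs))"
    using gt sets by (auto simp: strongly_concave_at_iff sorted_wrt_append)
  moreover have "int (length (xs @ c # ys)) - 2 * int (Suc (length xs)) + 1 = l"
    using rank by (simp add: xs_def ys_def)
  moreover have "sum_list (xs @ c # ys) = n"
    using sum sets by (simp add: xs_def ys_def distinct_sum_list_conv_Sum)
  ultimately show ?thesis
    unfolding L concave_compositions_def by blast
qed

lemma inj_on_composition_of_triple: "inj_on composition_of_triple (concave_triples l n)"
proof (rule inj_on_inverseI)
  fix t assume "t \<in> concave_triples l n"
  then obtain A c B where "t = (A, c, B)" "finite A" "finite B" "\<forall>x\<in>A \<union> B. c < x"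
    unfolding concave_triples_def by blast
  then show "triple_of_composition (composition_of_triple t) = t"
    by (simp add: composition_of_triple_def triple_of_composition_append_Cons)
qed

lemma sorted_list_of_set_set_strict:
  "sorted_wrt (<) xs \<Longrightarrow> sorted_list_of_set (set xs) = (xs :: nat list)"
  by (simp add: strict_sorted_iff sorted_list_of_set.idem_if_sorted_distinct)

lemma concave_compositions_subset_image:
  assumes "L \<in> concave_compositions l n"
  shows "L \<in> composition_of_triple ` concave_triples l n"
proof -
  obtain k where sc: "strongly_concave_at L k" and rank: "int (length L) - 2 * int k + 1 = l"
    and sum: "sum_list L = n"
    using assms by (auto simp: concave_compositions_def)
  define xs c ys where "xs = take (k - 1) L" and "c = L ! (k - 1)" and "ys = drop k L"
  have k: "1 \<le> k" "k \<le> length L"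
    using sc by (simp_all add: strongly_concave_at_iff)
  obtain j where j: "k = Suc j"
    using k(1) by (cases k) auto
  have parts: "take k L = xs @ [c]" "drop (k - 1) L = c # ys"
    using k by (simp_all add: j xs_def c_def ys_def take_Suc_conv_app_nth Cons_nth_drop_Suc)
  then have xs: "sorted_wrt (>) xs" "\<forall>x\<in>set xs. c < x" and ys: "sorted_wrt (<) ys" "\<forall>x\<in>set ys. c < x"
    using sc by (auto simp: strongly_concave_at_iff sorted_wrt_append)
  have L: "L = xs @ c # ys"
    using parts(2) append_take_drop_id[of "k - 1" L] by (simp add: xs_def)
  have "sorted_wrt (<) (rev xs)"
    using xs(1) by (simp add: sorted_wrt_rev)
  then have distinct: "distinct xs" "distinct ys"
    using ys(1) by (simp_all add: strict_sorted_iff)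
  have "card (set xs) = j" "card (set ys) = length L - k"
    using distinct k by (simp_all add: distinct_card xs_def ys_def j)
  moreover have "c + \<Sum>(set xs) + \<Sum>(set ys) = n"
    using sum distinct by (simp add: L distinct_sum_list_conv_Sum)
  ultimately have "(set xs, c, set ys) \<in> concave_triples l n"
    using xs(2) ys(2) rank k by (auto simp: concave_triples_def j)
  moreover have "sorted_list_of_set (set xs) = rev xs"
    using sorted_list_of_set_set_strict[of "rev xs"] xs(1) by (simp add: sorted_wrt_rev)
  then have "composition_of_triple (set xs, c, set ys) = L"
    using ys(1) by (simp add: composition_of_triple_def L sorted_list_of_set_set_strict)
  ultimately show ?thesis
    by (metis image_eqI)
qed

lemma Vd_eq_card_concave_triples:
  "0 \<le> n \<Longrightarrow> Vd l n = int (card (concave_triples l (nat n)))"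
proof -
  assume "0 \<le> n"
  have "concave_compositions l (nat n) = composition_of_triple ` concave_triples l (nat n)"
    using composition_of_triple_mem concave_compositions_subset_image by blast
  with \<open>0 \<le> n\<close> show ?thesis
    by (simp add: Vd_def concave_compositions_def[symmetric] card_image inj_on_composition_of_triple)
qed

lemma card_concave_triples_uminus: "card (concave_triples (- l) n) = card (concave_triples l n)"
proof -
  have "bij_betw (\<lambda>(A, c, B). (B, c, A)) (concave_triples (- l) n) (concave_triples l n)"
    by (rule bij_betwI[where g = "\<lambda>(A, c, B). (B, c, A)"]) (auto simp: concave_triples_def)
  then show ?thesis
    by (rule bij_betw_same_card)
qed

lemma card_le_sum_pos: "(\<forall>x\<in>A. 0 < x) \<Longrightarrow> card A \<le> \<Sum>(A :: nat set)"
  using sum_mono[of A "\<lambda>_. 1" id] by (simp add: Suc_le_eq)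

lemma card_concave_triples:
  "card (concave_triples (int l) n) =
     (\<Sum>c\<le>n. \<Sum>a\<le>n. \<Sum>i\<le>n - c. card (distinct_parts c a i) * card (distinct_parts c (a + l) (n - c - i)))"
proof -
  define block where "block = (\<lambda>(c, a, i).
    (\<lambda>(A, B). (A, c, B)) ` (distinct_parts c a i \<times> distinct_parts c (a + l) (n - c - i)))"
  define I where "I = Sigma {..n} (\<lambda>c. {..n} \<times> {..n - c})"
  have "concave_triples (int l) n = \<Union>(block ` I)"
  proof (intro equalityI subsetI)
    fix t assume "t \<in> concave_triples (int l) n"
    then obtain A c B where t: "t = (A, c, B)" "finite A" "finite B" "\<forall>x\<in>A. c < x" "\<forall>x\<in>B. c < x"
      "c + \<Sum>A + \<Sum>B = n" "card B = card A + l"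
      unfolding concave_triples_def by auto
    have "card A \<le> \<Sum>A"
      using t(4) by (intro card_le_sum_pos) auto
    then have "(c, card A, \<Sum>A) \<in> I" "t \<in> block (c, card A, \<Sum>A)"
      using t by (auto simp: I_def block_def distinct_parts_def)
    then show "t \<in> \<Union>(block ` I)"
      by blast
  qed (auto simp: I_def block_def distinct_parts_def concave_triples_def)
  moreover have card_block:
    "card (block (c, a, i)) = card (distinct_parts c a i) * card (distinct_parts c (a + l) (n - c - i))"
    for c a i
    by (simp add: block_def card_image inj_on_def card_cartesian_product)
  moreover have "finite (block x)" for x
    by (auto simp: block_def finite_distinct_parts split: prod.split)
  moreover have "t \<in> block x \<Longrightarrow> x = (fst (snd t), card (fst t), \<Sum>(fst t))" for t x
    by (auto simp: block_def distinct_parts_def split: prod.splits)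
  then have "\<forall>x\<in>I. \<forall>y\<in>I. x \<noteq> y \<longrightarrow> block x \<inter> block y = {}"
    by blast
  moreover have "finite I"
    by (simp add: I_def)
  ultimately have "card (concave_triples (int l) n) = (\<Sum>x\<in>I. card (block x))"
    by (simp add: card_UN_disjoint)
  also have "\<dots> = (\<Sum>c\<le>n. \<Sum>(a, i)\<in>{..n} \<times> {..n - c}. card (block (c, a, i)))"
    unfolding I_def by (subst sum.Sigma) (auto simp: split_def)
  finally show ?thesis
    by (simp add: sum.cartesian_product[symmetric] card_block)
qed

section \<open>The generating function of a fixed rank\<close>

definition rank_term :: "nat \<Rightarrow> nat \<Rightarrow> real fps" where
  "rank_term l a =
     fps_X ^ (a * (a + l + 1)) * qpoch_inv a * qpoch_inv (a + l) * geom (2 * a + l + 1)"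

definition rank_series :: "nat \<Rightarrow> real fps" where
  "rank_series l = fps_infsum (rank_term l)"

lemma fps_summable_rank_term: "fps_summable (rank_term l)"
  unfolding rank_term_def mult.assoc
  by (rule fps_summable_X_power_mult) (simp add: le_square trans_le_add1)

lemma triangular_add: "triangular a + triangular (a + l) = a * (a + l + 1) + triangular l"
proof -
  have "2 * (triangular a + triangular (a + l)) = 2 * (a * (a + l + 1) + triangular l)"
    by (simp only: distrib_left two_triangular) (simp add: algebra_simps)
  then show ?thesis
    by simp
qed

lemma X_power_triangular_mult_rank_term:
  "fps_X ^ triangular l * rank_term l a
     = distinct_parts_fps 0 a * distinct_parts_fps 0 (a + l) * geom (2 * a + l + 1)"
  by (simp add: rank_term_def distinct_parts_fps_eq power_add[symmetric] triangular_add mult_ac)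

lemma nth_X_power_mult_distinct_parts_fps:
  assumes "c \<le> n"
  shows "(fps_X ^ c * distinct_parts_fps c a * distinct_parts_fps c b) $ n
    = (\<Sum>i\<le>n - c. real (card (distinct_parts c a i) * card (distinct_parts c b (n - c - i))))"
  using assms unfolding mult.assoc fps_X_power_mult_nth
  by (simp add: fps_mult_nth distinct_parts_fps_def atLeast0AtMost)

lemma card_concave_triples_eq_nth:
  "real (card (concave_triples (int l) n)) = (fps_X ^ triangular l * rank_series l) $ n"
proof -
  have "(fps_X ^ triangular l * rank_series l) $ n = (\<Sum>a\<le>n. (fps_X ^ triangular l * rank_term l a) $ n)"
    by (simp add: rank_series_def fps_infsum_mult_left[OF fps_summable_rank_term, symmetric]
        fps_infsum_nth)
  also have "\<dots> = (\<Sum>a\<le>n. \<Sum>c\<le>n. (fps_X ^ c * distinct_parts_fps c a * distinct_parts_fps c (a + l)) $ n)"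
  proof (rule sum.cong[OF refl])
    fix a
    have "distinct_parts_fps 0 a * distinct_parts_fps 0 (a + l) * fps_X ^ (c * (2 * a + l + 1))
        = fps_X ^ c * distinct_parts_fps c a * distinct_parts_fps c (a + l)" for c
    proof -
      have "c * (2 * a + l + 1) = c + c * a + c * (a + l)"
        by (simp add: algebra_simps)
      then show ?thesis
        by (simp only: distinct_parts_fps_shift[of c] power_add mult_ac)
    qed
    then show "(fps_X ^ triangular l * rank_term l a) $ n
        = (\<Sum>c\<le>n. (fps_X ^ c * distinct_parts_fps c a * distinct_parts_fps c (a + l)) $ n)"
      by (simp add: X_power_triangular_mult_rank_term nth_mult_geom)
  qed
  also have "\<dots> = (\<Sum>c\<le>n. \<Sum>a\<le>n. (fps_X ^ c * distinct_parts_fps c a * distinct_parts_fps c (a + l)) $ n)"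
    by (rule sum.swap)
  also have "\<dots> = real (card (concave_triples (int l) n))"
    by (simp add: card_concave_triples nth_X_power_mult_distinct_parts_fps)
  finally show ?thesis ..
qed

section \<open>A coupled system of q-series\<close>

definition companion_term :: "nat \<Rightarrow> nat \<Rightarrow> real fps" where
  "companion_term l b =
     fps_X ^ (b * (b + l + 2)) * qpoch_inv b * qpoch_inv (b + l) * geom (2 * b + l + 1)"

definition companion_series :: "nat \<Rightarrow> real fps" where
  "companion_series l = fps_infsum (companion_term l)"

lemma fps_summable_companion_term: "fps_summable (companion_term l)"
  unfolding companion_term_def mult.assoc
  by (rule fps_summable_X_power_mult) (simp add: le_square trans_le_add1)

lemma rank_companion_term_0:
  "rank_term l 0 = durfee_term (Suc l) 0" "companion_term l 0 = durfee_term (Suc l) 0"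
  by (simp_all add: rank_term_def companion_term_def durfee_term_def qpoch_inv_Suc)

lemma durfee_rank_companion_term_factor:
  fixes l b :: nat
  defines "C \<equiv> fps_X ^ (Suc b * (b + l + 2)) * qpoch_inv b * qpoch_inv (b + l + 1)"
    and "u \<equiv> geom (Suc b)" and "v \<equiv> geom (b + l + 2)" and "w \<equiv> geom (2 * b + l + 3)"
  shows "durfee_term (Suc l) (Suc b) = C * (u * v)"
    and "rank_term l (Suc b) = C * (u * w)"
    and "fps_X ^ (2 * l + 4) * companion_term (l + 2) b = C * (fps_X ^ (b + l + 2) * v * w)"
    and "companion_term l (Suc b) = C * (fps_X ^ Suc b * u * w)"
    and "fps_X ^ (l + 2) * rank_term (l + 2) b = C * (v * w)"
proof -
  define E where "E = Suc b * (b + l + 2)"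
  have C: "C = fps_X ^ E * qpoch_inv b * qpoch_inv (b + l + 1)"
    by (simp add: C_def E_def)
  have q: "qpoch_inv (Suc b) = qpoch_inv b * u" "qpoch_inv (b + l + 2) = qpoch_inv (b + l + 1) * v"
    by (simp_all add: u_def v_def qpoch_inv_Suc)
  have idx: "Suc b + Suc l = b + l + 2" "Suc b + l = b + l + 1" "b + (l + 2) = b + l + 2"
    "2 * Suc b + l + 1 = 2 * b + l + 3" "2 * b + (l + 2) + 1 = 2 * b + l + 3"
    by simp_all
  have "Suc b * (Suc b + Suc l) = E"
    by (simp add: E_def)
  then show "durfee_term (Suc l) (Suc b) = C * (u * v)"
    unfolding durfee_term_def idx C q by (simp only: mult_ac)
  have "Suc b * (Suc b + l + 1) = E"
    by (simp add: E_def)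
  then show "rank_term l (Suc b) = C * (u * w)"
    unfolding rank_term_def idx C q w_def[symmetric] by (simp only: mult_ac)
  have "Suc b * (Suc b + l + 2) = E + Suc b"
    by (simp add: E_def)
  then show "companion_term l (Suc b) = C * (fps_X ^ Suc b * u * w)"
    unfolding companion_term_def idx C q w_def[symmetric] by (simp only: power_add mult_ac)
  have "2 * l + 4 + b * (b + l + 2 + 2) = E + (b + l + 2)"
    by (simp add: E_def algebra_simps)
  then have X: "fps_X ^ (2 * l + 4) * fps_X ^ (b * (b + l + 2 + 2)) = fps_X ^ E * fps_X ^ (b + l + 2)"
    by (simp only: power_add[symmetric])
  show "fps_X ^ (2 * l + 4) * companion_term (l + 2) b = C * (fps_X ^ (b + l + 2) * v * w)"
    unfolding companion_term_def idx C q w_def[symmetric] mult.assoc[symmetric] X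
    by (simp only: mult_ac)
  have "l + 2 + b * (b + l + 2 + 1) = E"
    by (simp add: E_def algebra_simps)
  then have X: "fps_X ^ (l + 2) * fps_X ^ (b * (b + l + 2 + 1)) = fps_X ^ E"
    by (simp only: power_add[symmetric])
  show "fps_X ^ (l + 2) * rank_term (l + 2) b = C * (v * w)"
    unfolding rank_term_def idx C q w_def[symmetric] mult.assoc[symmetric] X
    by (simp only: mult_ac)
qed

lemma rank_companion_term_Suc:
  "rank_term l (Suc b) + fps_X ^ (2 * l + 4) * companion_term (l + 2) b = durfee_term (Suc l) (Suc b)"
  "companion_term l (Suc b) + fps_X ^ (l + 2) * rank_term (l + 2) b = durfee_term (Suc l) (Suc b)"
proof -
  define u v w where "u = geom (Suc b)" and "v = geom (b + l + 2)" and "w = geom (2 * b + l + 3)"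
  have "2 * b + l + 3 = Suc b + (b + l + 2)"
    by simp
  then have uv: "u * v = w * (u + v - 1)"
    unfolding u_def v_def w_def by (simp only: geom_mult_geom le_add2 Suc_le_mono)
  have u: "fps_X ^ Suc b * u = u - 1" and v: "fps_X ^ (b + l + 2) * v = v - 1"
    by (simp_all only: u_def v_def X_power_mult_geom le_add2 Suc_le_mono)
  show "rank_term l (Suc b) + fps_X ^ (2 * l + 4) * companion_term (l + 2) b
      = durfee_term (Suc l) (Suc b)"
    unfolding durfee_rank_companion_term_factor u_def[symmetric] v_def[symmetric] w_def[symmetric]
      uv v by (simp add: algebra_simps)
  show "companion_term l (Suc b) + fps_X ^ (l + 2) * rank_term (l + 2) b
      = durfee_term (Suc l) (Suc b)"
    unfolding durfee_rank_companion_term_factor u_def[symmetric] v_def[symmetric] w_def[symmetric]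
      uv u by (simp add: algebra_simps)
qed

lemma rank_series_rel:
  "rank_series l + fps_X ^ (2 * l + 4) * companion_series (l + 2) = partition_fps"
  unfolding rank_series_def companion_series_def durfee_identity[of "Suc l", symmetric]
  by (rule fps_infsum_add_mult_shifted[OF _ _ _ rank_companion_term_0(1) rank_companion_term_Suc(1)])
    (simp_all add: fps_summable_rank_term fps_summable_companion_term fps_summable_durfee_term)

lemma companion_series_rel:
  "companion_series l + fps_X ^ (l + 2) * rank_series (l + 2) = partition_fps"
  unfolding rank_series_def companion_series_def durfee_identity[of "Suc l", symmetric]
  by (rule fps_infsum_add_mult_shifted[OF _ _ _ rank_companion_term_0(2) rank_companion_term_Suc(2)])
    (simp_all add: fps_summable_rank_term fps_summable_companion_term fps_summable_durfee_term)

definition theta_series :: "nat \<Rightarrow> real fps" where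
  "theta_series l = fps_infsum (\<lambda>j.
     fps_X ^ (6 * j * j + 2 * j + 3 * j * l) - fps_X ^ (6 * j * j + 10 * j + 4 + (3 * j + 2) * l))"

definition theta_companion :: "nat \<Rightarrow> real fps" where
  "theta_companion l = fps_infsum (\<lambda>j.
     fps_X ^ (6 * j * j + 4 * j + 3 * j * l) - fps_X ^ (6 * j * j + 8 * j + 2 + (3 * j + 1) * l))"

lemma fps_infsum_X_power_diff_pair:
  assumes "a 0 = 0" "\<And>j. j \<le> a j" "\<And>j. j \<le> c j" "\<And>j. j \<le> d j"
    and "\<And>j. s + c j = b j" "\<And>j. s + d j = a (Suc j)"
  shows "fps_infsum (\<lambda>j. fps_X ^ a j - fps_X ^ b j)
      + fps_X ^ s * fps_infsum (\<lambda>j. fps_X ^ c j - fps_X ^ d j) = (1 :: 'a::comm_ring_1 fps)"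
proof -
  have summable: "fps_summable (\<lambda>j. fps_X ^ c j - fps_X ^ d j :: 'a fps)"
    by (intro fps_summable_diff fps_summable_X_power assms)
  have termwise: "fps_X ^ a j - fps_X ^ b j + fps_X ^ s * (fps_X ^ c j - fps_X ^ d j)
      = fps_X ^ a j - (fps_X ^ a (Suc j) :: 'a fps)" for j
    by (simp add: right_diff_distrib assms(5,6)[symmetric] power_add)
  have "fps_infsum (\<lambda>j. fps_X ^ a j - fps_X ^ b j :: 'a fps)
      + fps_X ^ s * fps_infsum (\<lambda>j. fps_X ^ c j - fps_X ^ d j)
      = fps_infsum (\<lambda>j. fps_X ^ a j - fps_X ^ b j + fps_X ^ s * (fps_X ^ c j - fps_X ^ d j))"
    by (simp only: fps_infsum_mult_left[OF summable, symmetric] fps_infsum_add[symmetric])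
  also have "\<dots> = fps_infsum (\<lambda>j. fps_X ^ a j - fps_X ^ a (Suc j))"
    by (simp only: termwise)
  also have "\<dots> = 1"
    using fps_infsum_telescope[OF fps_summable_X_power[OF assms(2)]] assms(1) by simp
  finally show ?thesis .
qed

lemma theta_series_rel: "theta_series l + fps_X ^ (2 * l + 4) * theta_companion (l + 2) = 1"
  unfolding theta_series_def theta_companion_def
  by (rule fps_infsum_X_power_diff_pair) (simp_all add: algebra_simps)

lemma theta_companion_rel: "theta_companion l + fps_X ^ (l + 2) * theta_series (l + 2) = 1"
  unfolding theta_series_def theta_companion_def
  by (rule fps_infsum_X_power_diff_pair) (simp_all add: algebra_simps)

lemma nth_X_power_mult_eq_0:
  assumes "k > 0" "\<forall>m<n. F $ m = 0"
  shows "(fps_X ^ k * F) $ n = 0"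
  using assms by (simp add: fps_X_power_mult_nth)

lemma coupled_fps_system_eq_0:
  fixes D E :: "nat \<Rightarrow> 'a::comm_ring_1 fps"
  assumes "\<And>l. p l > 0" "\<And>l. r l > 0"
    and D: "\<And>l. D l = - (fps_X ^ p l * E (q l))" and E: "\<And>l. E l = - (fps_X ^ r l * D (s l))"
  shows "D l = 0"
proof -
  have "\<forall>l. D l $ n = 0 \<and> E l $ n = 0" for n
  proof (induction n rule: less_induct)
    case (less n)
    show ?case
    proof
      fix l
      show "D l $ n = 0 \<and> E l $ n = 0"
        unfolding D[of l] E[of l] using less assms(1,2)
        by (simp add: nth_X_power_mult_eq_0)
    qed
  qed
  then show ?thesis
    by (simp add: fps_eq_iff)
qed

lemma coupled_fps_system_unique:
  fixes A B A' B' :: "nat \<Rightarrow> 'a::comm_ring_1 fps"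
  assumes "\<And>l. p l > 0" "\<And>l. r l > 0"
    and "\<And>l. A l + fps_X ^ p l * B (q l) = R" "\<And>l. B l + fps_X ^ r l * A (s l) = R"
    and "\<And>l. A' l + fps_X ^ p l * B' (q l) = R" "\<And>l. B' l + fps_X ^ r l * A' (s l) = R"
  shows "A l = A' l"
proof -
  have dA: "A l - A' l = - (fps_X ^ p l * (B (q l) - B' (q l)))" for l
  proof -
    have "A l = R - fps_X ^ p l * B (q l)" "A' l = R - fps_X ^ p l * B' (q l)"
      using assms(3,5)[of l] by (simp_all add: eq_diff_eq)
    then show ?thesis
      by (simp add: right_diff_distrib)
  qed
  have dB: "B l - B' l = - (fps_X ^ r l * (A (s l) - A' (s l)))" for l
  proof -
    have "B l = R - fps_X ^ r l * A (s l)" "B' l = R - fps_X ^ r l * A' (s l)"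
      using assms(4,6)[of l] by (simp_all add: eq_diff_eq)
    then show ?thesis
      by (simp add: right_diff_distrib)
  qed
  have "A l - A' l = 0"
    by (rule coupled_fps_system_eq_0[where D = "\<lambda>l. A l - A' l" and E = "\<lambda>l. B l - B' l"])
      (rule assms(1,2) dA dB)+
  then show ?thesis
    by simp
qed

lemma rank_series_eq: "rank_series l = partition_fps * theta_series l"
proof (rule coupled_fps_system_unique)
  show "rank_series l + fps_X ^ (2 * l + 4) * companion_series (l + 2) = partition_fps"
    and "companion_series l + fps_X ^ (l + 2) * rank_series (l + 2) = partition_fps" for l
    by (rule rank_series_rel companion_series_rel)+
  show "partition_fps * theta_series l + fps_X ^ (2 * l + 4) * (partition_fps * theta_companion (l + 2))
      = partition_fps"
    and "partition_fps * theta_companion l + fps_X ^ (l + 2) * (partition_fps * theta_series (l + 2))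
      = partition_fps" for l
    using arg_cong[OF theta_series_rel[of l], of "(*) partition_fps"]
      arg_cong[OF theta_companion_rel[of l], of "(*) partition_fps"]
    by (simp_all add: algebra_simps)
qed simp_all

text \<open>The division is exact except for k mod 3 = 1, where the Kronecker symbol vanishes.\<close>
definition theta_exponent :: "nat \<Rightarrow> nat \<Rightarrow> nat" where
  "theta_exponent k l = 2 * k * (k + 1) div 3 + k * l"

lemma le_theta_exponent: "k \<le> theta_exponent k l"
proof -
  have "3 * k \<le> 2 * k * (k + 1)"
    by (cases k) (simp_all add: algebra_simps)
  then show ?thesis
    unfolding theta_exponent_def by (metis div_le_mono le_add1 nonzero_mult_div_cancel_left
        order.trans zero_neq_numeral)
qed

lemma fps_summable_kron_terms:
  "fps_summable (\<lambda>k. fps_const (of_int (kron_m3 k)) * fps_X ^ theta_exponent k l :: real fps)"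
  using fps_summable_X_power_mult[OF le_theta_exponent, where h = "\<lambda>k. fps_const (of_int (kron_m3 k))"]
  by (simp add: mult.commute)

lemma theta_series_eq_kron_sum:
  "theta_series l = fps_infsum (\<lambda>k. fps_const (of_int (kron_m3 k)) * fps_X ^ theta_exponent k l)"
proof -
  have "theta_exponent (3 * j) l = 6 * j * j + 2 * j + 3 * j * l"
    "theta_exponent (3 * j + 2) l = 6 * j * j + 10 * j + 4 + (3 * j + 2) * l" for j
  proof -
    have "2 * (3 * j) * (3 * j + 1) = 3 * (6 * j * j + 2 * j)"
      "2 * (3 * j + 2) * (3 * j + 2 + 1) = 3 * (6 * j * j + 10 * j + 4)"
      by (simp_all add: algebra_simps)
    then show "theta_exponent (3 * j) l = 6 * j * j + 2 * j + 3 * j * l"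
      "theta_exponent (3 * j + 2) l = 6 * j * j + 10 * j + 4 + (3 * j + 2) * l"
      by (simp_all only: theta_exponent_def) (simp_all add: algebra_simps)
  qed
  moreover have "kron_m3 (3 * j) = 1" "kron_m3 (3 * j + 1) = 0" "kron_m3 (3 * j + 2) = -1" for j
  proof -
    have "(3 * j) mod 3 = 0" "(3 * j + 1) mod 3 = 1" "(3 * j + 2) mod 3 = 2"
      by presburger+
    then show "kron_m3 (3 * j) = 1" "kron_m3 (3 * j + 1) = 0" "kron_m3 (3 * j + 2) = -1"
      by (simp_all only: kron_m3_def) simp_all
  qed
  ultimately have
    "(\<Sum>i\<in>{j * 3..<j * 3 + 3}. fps_const (of_int (kron_m3 i)) * fps_X ^ theta_exponent i l)
      = fps_X ^ (6 * j * j + 2 * j + 3 * j * l)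
        - (fps_X ^ (6 * j * j + 10 * j + 4 + (3 * j + 2) * l) :: real fps)"
    for j
    by (simp add: numeral_3_eq_3 mult.commute[of j] fps_const_neg[symmetric] del: fps_const_neg)
  then show ?thesis
    by (simp add: fps_infsum_group[OF fps_summable_kron_terms, of 3] theta_series_def)
qed

lemma nth_X_power_mult_partition_fps:
  "(fps_X ^ e * partition_fps) $ n = of_int (partitions_count (int n - int e))"
proof (cases "n < e")
  case False
  then have diff: "int n - int e = int (n - e)"
    by simp
  from False show ?thesis
    unfolding diff by (simp add: fps_X_power_mult_nth partition_fps_def)
qed (simp add: fps_X_power_mult_nth partitions_count_def)

lemma rank_series_nth:
  "rank_series l $ n
     = (\<Sum>k\<le>n. of_int (kron_m3 k * partitions_count (int n - int (theta_exponent k l))))"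
proof -
  have "rank_series l = partition_fps *
      fps_infsum (\<lambda>k. fps_const (of_int (kron_m3 k)) * fps_X ^ theta_exponent k l)"
    by (simp only: rank_series_eq theta_series_eq_kron_sum)
  also have "\<dots> = fps_infsum (\<lambda>k.
      partition_fps * (fps_const (of_int (kron_m3 k)) * fps_X ^ theta_exponent k l))"
    by (rule fps_infsum_mult_left[OF fps_summable_kron_terms, symmetric])
  also have "\<dots> = fps_infsum (\<lambda>k.
      fps_const (of_int (kron_m3 k)) * (fps_X ^ theta_exponent k l * partition_fps))"
    by (simp only: mult_ac)
  finally show ?thesis
    by (simp add: fps_infsum_nth nth_X_power_mult_partition_fps)
qed

lemma Vd_shifted_eq_sum:
  fixes l N :: int
  defines "L \<equiv> nat \<bar>l\<bar>"
  shows "real_of_int (Vd l (N + int (triangular L)))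
    = (\<Sum>k\<le>nat N. of_int (kron_m3 k * partitions_count (N - int (theta_exponent k L))))"
proof -
  have card: "card (concave_triples l m) = card (concave_triples (int L) m)" for m
    using card_concave_triples_uminus[of "int L" m] by (cases "0 \<le> l") (simp_all add: L_def)
  show ?thesis
  proof (cases "N < 0")
    case True
    have "real_of_int (Vd l (N + int (triangular L))) = 0"
    proof (cases "N + int (triangular L) < 0")
      case False
      then have "nat (N + int (triangular L)) < triangular L"
        using True by linarith
      with False show ?thesis
        by (simp add: Vd_eq_card_concave_triples card card_concave_triples_eq_nth
            fps_X_power_mult_nth)
    qed (simp add: Vd_def)
    with True show ?thesis
      by (simp add: partitions_count_def theta_exponent_def)
  next
    case False
    then have "real_of_int (Vd l (N + int (triangular L))) = rank_series L $ nat N"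
      by (simp add: Vd_eq_card_concave_triples card card_concave_triples_eq_nth
          fps_X_power_mult_nth nat_add_distrib)
    with False show ?thesis
      by (simp add: rank_series_nth)
  qed
qed

lemma int_theta_exponent: "int (theta_exponent k L) = 2 * int k * (int k + 1) div 3 + int k * int L"
proof -
  have "int (2 * k * (k + 1) div 3) = 2 * int k * (int k + 1) div 3"
    by (simp add: zdiv_int algebra_simps)
  then show ?thesis
    by (simp add: theta_exponent_def)
qed

lemma int_triangular: "int (triangular L) = int L * (int L + 1) div 2"
proof -
  have "triangular L = L * (L + 1) div 2"
    using two_triangular[of L] by simp
  then have "int (triangular L) = int (L * (L + 1)) div int 2"
    by (simp only: zdiv_int)
  then show ?thesis
    by (simp add: algebra_simps)
qed

lemma Vd_shifted_sums:
  fixes N l :: int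
  shows "(\<lambda>k. real_of_int (kron_m3 k * partitions_count (N - int (theta_exponent k (nat \<bar>l\<bar>)))))
    sums real_of_int (Vd l (N + int (triangular (nat \<bar>l\<bar>))))"
  unfolding Vd_shifted_eq_sum
proof (rule sums_finite)
  fix k assume "k \<notin> {..nat N}"
  then have "N < int k"
    by auto
  then have "N < int (theta_exponent k (nat \<bar>l\<bar>))"
    using le_theta_exponent[of k "nat \<bar>l\<bar>"] by linarith
  then show "real_of_int (kron_m3 k * partitions_count (N - int (theta_exponent k (nat \<bar>l\<bar>)))) = 0"
    by (simp add: partitions_count_def)
qed simp

lemma theta_exponent_ge: "2 \<le> k \<Longrightarrow> 2 * L + 4 \<le> theta_exponent k L"
proof -
  assume k: "2 \<le> k"
  then have "2 * 2 * (2 + 1) \<le> 2 * k * (k + 1)"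
    by (intro mult_le_mono) simp_all
  then have "12 div 3 \<le> 2 * k * (k + 1) div 3"
    by (intro div_le_mono) simp
  moreover have "2 * L \<le> k * L"
    using k by (rule mult_le_mono1)
  ultimately show ?thesis
    unfolding theta_exponent_def by linarith
qed

lemma Vd_eq_partitions_count_below:
  fixes m N :: int
  assumes "N < 2 * int (nat \<bar>m\<bar>) + 4"
  shows "Vd m (N + int (triangular (nat \<bar>m\<bar>))) = partitions_count N"
proof -
  have "kron_m3 k * partitions_count (N - int (theta_exponent k (nat \<bar>m\<bar>))) = 0" if "k \<noteq> 0" for k
  proof (cases "k = 1")
    case False
    then have "N < int (theta_exponent k (nat \<bar>m\<bar>))"
      using assms theta_exponent_ge[of k "nat \<bar>m\<bar>"] that by linarith
    then show ?thesis
      by (simp add: partitions_count_def)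
  qed (simp add: kron_m3_def)
  then have "(\<lambda>k. real_of_int (kron_m3 k * partitions_count (N - int (theta_exponent k (nat \<bar>m\<bar>)))))
      = (\<lambda>k. if k = 0 then real_of_int (partitions_count N) else 0)"
    by (auto simp: theta_exponent_def kron_m3_def)
  then have "(\<lambda>k. if k = 0 then real_of_int (partitions_count N) else 0)
      sums real_of_int (Vd m (N + int (triangular (nat \<bar>m\<bar>))))"
    using Vd_shifted_sums[of N m] by simp
  then show ?thesis
    using sums_single[of 0 "\<lambda>_. real_of_int (partitions_count N)"] sums_unique2 by fastforce
qed

lemma Vd_sums_kron:
  fixes N l :: int
  shows "(\<lambda>n. real_of_int (kron_m3 n *
      partitions_count (N - (2 * int n * (int n + 1)) div 3 - int n * \<bar>l\<bar>)))
    sums real_of_int (Vd l (N + \<bar>l\<bar> * (\<bar>l\<bar> + 1) div 2))"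
proof -
  have "N - (2 * int n * (int n + 1)) div 3 - int n * \<bar>l\<bar> = N - int (theta_exponent n (nat \<bar>l\<bar>))"
    for n
    by (simp add: int_theta_exponent)
  moreover have "\<bar>l\<bar> * (\<bar>l\<bar> + 1) div 2 = int (triangular (nat \<bar>l\<bar>))"
    by (simp add: int_triangular)
  ultimately show ?thesis
    by (simp only: Vd_shifted_sums)
qed

lemma Vd_eq_partitions_count:
  fixes m n :: int
  assumes "real_of_int n < real_of_int (\<bar>m\<bar> * (\<bar>m\<bar> + 5)) / 2 + 4"
  shows "Vd m n = partitions_count (n - \<bar>m\<bar> * (\<bar>m\<bar> + 1) div 2)"
proof -
  define L where "L = nat \<bar>m\<bar>"
  have "real_of_int (2 * n) < real_of_int (\<bar>m\<bar> * (\<bar>m\<bar> + 5) + 8)"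
    using assms by simp
  then have "2 * n < int L * (int L + 5) + 8"
    unfolding of_int_less_iff by (simp add: L_def)
  then have "n - int (triangular L) < 2 * int L + 4"
    using arg_cong[OF two_triangular[of L], of int] by (simp add: algebra_simps)
  from Vd_eq_partitions_count_below[OF this[unfolded L_def]] show ?thesis
    by (simp add: L_def int_triangular)
qed

theorem proposition1:
  shows "(\<forall>N l :: int.
            (\<lambda>n. real_of_int (kron_m3 n *
                partitions_count (N - (2 * int n * (int n + 1)) div 3 - int n * \<bar>l\<bar>)))
            sums real_of_int (Vd l (N + \<bar>l\<bar> * (\<bar>l\<bar> + 1) div 2)))
       \<and> (\<forall>m n :: int. 0 \<le> n \<and>
            real_of_int n < real_of_int (\<bar>m\<bar> * (\<bar>m\<bar> + 5)) / 2 + 4 \<longrightarrow>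
            Vd m n = partitions_count (n - \<bar>m\<bar> * (\<bar>m\<bar> + 1) div 2))"
  using Vd_sums_kron Vd_eq_partitions_count by blast

end
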